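(* Let $n\geq 2$ and let $t\geq 2$ be even. Then no vertex of $D^*_{n,t}=D_{n,t}\setminus\{1^t\}$ is adjacent to $1^t$ in $S(K_n,t)$.
   Context: For a positive integer $n$ let $[n]=\{1,\dots,n\}$. For positive integers $n,t$, the Sierpiński graph $S(K_n,t)$ is the simple graph with vertex set $[n]^t$ (words $v_1v_2\cdots v_t$ with $v_i\in[n]$), in which $u_1\cdots u_t$ and $v_1\cdots v_t$ are adjacent if and only if there is $s\in[t]$ with $u_j=v_j$ for all $j<s$, $u_s\neq v_s$, and $u_j=v_s$ and $v_j=u_s$ for all $j>s$. Write $a^k$ for the word consisting of $k$ copies of the letter $a$. The sets $D_{n,t}\subseteq[n]^t$ are defined recursively: $D_{n,1}=\{1\}$, $D_{n,2}=\{11,21,\dots,n1\}$. For $t\geq 3$ and $\mathbf v=v_1\cdots v_{t-2}\in D_{n,t-2}$ put $E_1(\mathbf v)=\{v_1\cdots v_{t-2}\alpha\alpha:\alpha\in[n]\}$, $E_2(\mathbf v)=\{v_1\cdots v_{t-3}\alpha\beta v_{t-2}:\alpha,\beta\in[n]\setminus\{v_{t-2}\}\}$, and, if $\mathbf v$ is not a constant word, let $\ell$ be the largest index in $[t-3]$ with $v_\ell\neq v_{\ell+1}$ and put $E_3(\mathbf v)=\{v_1\cdots v_{\ell-1}v_{\ell+1}v_\ell^{\,t-\ell-2}\alpha v_\ell:\alpha\in[n]\setminus\{v_\ell\}\}$. If $t\geq 3$ is odd, $D_{n,t}=E_1(1^{t-2})\cup E_2(1^{t-2})\cup\bigcup_{\mathbf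 v\in D_{n,t-2}\setminus\{1^{t-2}\}}\big(E_1(\mathbf v)\cup E_2(\mathbf v)\cup E_3(\mathbf v)\big)$. If $t\geq 4$ is even, $D_{n,t}=\{1^{t-2}\alpha1:\alpha\in[n]\}\cup\bigcup_{\mathbf v\in D_{n,t-2}\setminus\{1^{t-2}\}}\big(E_1(\mathbf v)\cup E_2(\mathbf v)\cup E_3(\mathbf v)\big)$. (In this recursion $1^{t-2}\in D_{n,t-2}$ is the only constant word in $D_{n,t-2}$, so $E_3$ is applied only to non-constant words.) *)

theory Defs
  imports Main
begin

(* Words v_1 ... v_t over [n] are represented as lists of length t (0-based indices). *)

definition sierpinski_vertices :: "nat \<Rightarrow> nat \<Rightarrow> nat list set" where
  "sierpinski_vertices n t = {w. length w = t \<and> set w \<subseteq> {1..n}}"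

definition sierpinski_adj :: "nat \<Rightarrow> nat \<Rightarrow> nat list \<Rightarrow> nat list \<Rightarrow> bool" where
  "sierpinski_adj n t u v \<longleftrightarrow>
     u \<in> sierpinski_vertices n t \<and> v \<in> sierpinski_vertices n t \<and>
     (\<exists>s<t. (\<forall>j<s. u ! j = v ! j) \<and> u ! s \<noteq> v ! s \<and>
             (\<forall>j. s < j \<and> j < t \<longrightarrow> u ! j = v ! s \<and> v ! j = u ! s))"

definition E1 :: "nat \<Rightarrow> nat list \<Rightarrow> nat list set" where
  "E1 n v = {v @ [a, a] | a. a \<in> {1..n}}"

definition E2 :: "nat \<Rightarrow> nat list \<Rightarrow> nat list set" where
  "E2 n v = {butlast v @ [a, b, last v] | a b. a \<in> {1..n} - {last v} \<and> b \<in> {1..n} - {last v}}"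

(* 0-based index i = l - 1 of the largest position l in [t-3] with v_l \<noteq> v_{l+1} *)
definition lastchg :: "nat list \<Rightarrow> nat" where
  "lastchg v = (GREATEST i. i + 1 < length v \<and> v ! i \<noteq> v ! (i + 1))"

(* v_1 ... v_{l-1} v_{l+1} v_l^{t-l-2} alpha v_l, where length v = t - 2 *)
definition E3 :: "nat \<Rightarrow> nat list \<Rightarrow> nat list set" where
  "E3 n v = (let i = lastchg v in
     {take i v @ [v ! (i + 1)] @ replicate (length v - i - 1) (v ! i) @ [a, v ! i]
       | a. a \<in> {1..n} - {v ! i}})"

fun D :: "nat \<Rightarrow> nat \<Rightarrow> nat list set" where
  "D n 0 = {}"
| "D n (Suc 0) = {[1]}"
| "D n (Suc (Suc 0)) = {[a, 1] | a. a \<in> {1..n}}"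
| "D n (Suc (Suc (Suc k))) =
     (let t = k + 3; one = replicate (Suc k) (1::nat);
          rest = (\<Union>v \<in> D n (Suc k) - {one}. E1 n v \<union> E2 n v \<union> E3 n v)
      in if odd t then E1 n one \<union> E2 n one \<union> rest
         else {one @ [a, 1] | a. a \<in> {1..n}} \<union> rest)"

end

theory Submission
  imports Defs
begin

text \<open>The only neighbours of \<open>1\<^sup>t\<close> in \<open>S(K\<^sub>n,t)\<close> are the words \<open>1\<^sup>t\<^sup>-\<^sup>1c\<close> with \<open>c \<noteq> 1\<close>.
  By induction along the recursion, no word of \<open>D\<^sub>n\<^sub>,\<^sub>t\<close> of even length has this shape:
  \<open>1\<^sup>t\<^sup>-\<^sup>2\<alpha>1\<close> and the words of \<open>E\<^sub>1\<close> and \<open>E\<^sub>3\<close> end in a letter that already occurs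
  before the last position, while a word of \<open>E\<^sub>2(v)\<close> of this shape forces \<open>v\<close> itself to have it.
  Alongside runs the invariant that every word of \<open>D\<^sub>n\<^sub>,\<^sub>t\<close> other than \<open>1\<^sup>t\<close> is non-constant,
  which is what makes \<open>E\<^sub>3\<close> well-behaved.\<close>

definition nonconstant :: "'a list \<Rightarrow> bool" where
  "nonconstant xs \<longleftrightarrow> (\<exists>x\<in>set xs. \<exists>y\<in>set xs. x \<noteq> y)"

definition ones_but_last :: "nat list \<Rightarrow> bool" where
  "ones_but_last w \<longleftrightarrow> (\<exists>c. c \<noteq> 1 \<and> w = replicate (length w - 1) 1 @ [c])"

lemma ones_but_last_iff:
  "ones_but_last w \<longleftrightarrow> w \<noteq> [] \<and> set (butlast w) \<subseteq> {1} \<and> last w \<noteq> 1"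
proof
  assume "ones_but_last w"
  then obtain m c where "c \<noteq> 1" "w = replicate m 1 @ [c]"
    unfolding ones_but_last_def by blast
  then show "w \<noteq> [] \<and> set (butlast w) \<subseteq> {1} \<and> last w \<noteq> 1" by auto
next
  assume w: "w \<noteq> [] \<and> set (butlast w) \<subseteq> {1} \<and> last w \<noteq> 1"
  then have "butlast w = replicate (length w - 1) 1"
    by (intro replicate_eqI) auto
  with w show "ones_but_last w"
    unfolding ones_but_last_def by (metis append_butlast_last_id)
qed

lemma nonconstantI: "x \<in> set w \<Longrightarrow> w \<noteq> replicate (length w) x \<Longrightarrow> nonconstant w"
  unfolding nonconstant_def by (metis replicate_eqI)

lemma nonconstant_adjacent_change:
  "nonconstant xs \<Longrightarrow> \<exists>i. Suc i < length xs \<and> xs ! i \<noteq> xs ! Suc i"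
proof (induction xs)
  case Nil
  then show ?case by (simp add: nonconstant_def)
next
  case (Cons x xs)
  show ?case
  proof (cases "nonconstant xs")
    case True
    with Cons.IH obtain i where "Suc i < length xs" "xs ! i \<noteq> xs ! Suc i" by blast
    then show ?thesis by (intro exI[of _ "Suc i"]) simp
  next
    case False
    from Cons.prems obtain y where y: "y \<in> set xs" "y \<noteq> x"
      unfolding nonconstant_def by auto
    then have "xs ! 0 = y"
      using False unfolding nonconstant_def by (metis length_pos_if_in_set nth_mem)
    then show ?thesis using y by (intro exI[of _ 0]) auto
  qed
qed

lemma lastchg_change:
  assumes "nonconstant v"
  shows "Suc (lastchg v) < length v" "v ! lastchg v \<noteq> v ! Suc (lastchg v)"
proof -
  let ?change = "\<lambda>i. i + 1 < length v \<and> v ! i \<noteq> v ! (i + 1)"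
  obtain i where "?change i"
    using nonconstant_adjacent_change[OF assms] by auto
  moreover have "\<And>j. ?change j \<Longrightarrow> j \<le> length v" by simp
  ultimately have "?change (lastchg v)"
    unfolding lastchg_def by (rule GreatestI_nat)
  then show "Suc (lastchg v) < length v" "v ! lastchg v \<noteq> v ! Suc (lastchg v)" by auto
qed

lemma E1_length: "x \<in> E1 n v \<Longrightarrow> length x = length v + 2"
  by (auto simp: E1_def)

lemma E2_length: "v \<noteq> [] \<Longrightarrow> x \<in> E2 n v \<Longrightarrow> length x = length v + 2"
  by (auto simp: E2_def)

lemma E3_length: "nonconstant v \<Longrightarrow> x \<in> E3 n v \<Longrightarrow> length x = length v + 2"
  using lastchg_change(1)[of v] by (auto simp: E3_def Let_def)

lemma E1_nonconstant: "nonconstant v \<Longrightarrow> x \<in> E1 n v \<Longrightarrow> nonconstant x"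
  by (fastforce simp: E1_def nonconstant_def)

lemma E2_nonconstant: "x \<in> E2 n v \<Longrightarrow> nonconstant x"
  by (auto simp: E2_def nonconstant_def)

lemma E3_nonconstant: "nonconstant v \<Longrightarrow> x \<in> E3 n v \<Longrightarrow> nonconstant x"
  using lastchg_change(2)[of v] by (auto simp: E3_def Let_def nonconstant_def)

lemma E1_not_ones_but_last: "x \<in> E1 n v \<Longrightarrow> \<not> ones_but_last x"
  by (auto simp: E1_def ones_but_last_iff butlast_append)

lemma E2_ones_but_last:
  "v \<noteq> [] \<Longrightarrow> x \<in> E2 n v \<Longrightarrow> ones_but_last x \<Longrightarrow> ones_but_last v"
  by (auto simp: E2_def ones_but_last_iff butlast_append)

lemma E3_not_ones_but_last: "nonconstant v \<Longrightarrow> x \<in> E3 n v \<Longrightarrow> \<not> ones_but_last x"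
  using lastchg_change(1)[of v] by (auto simp: E3_def Let_def ones_but_last_iff butlast_append)

lemma mem_D_Suc_Suc_SucE:
  assumes "w \<in> D n (Suc (Suc (Suc k)))"
  obtains (even_base) a where "odd k" "a \<in> {1..n}" "w = replicate (Suc k) 1 @ [a, 1]"
  | (odd_base) "even k" "w \<in> E1 n (replicate (Suc k) 1) \<union> E2 n (replicate (Suc k) 1)"
  | (extension) v where "v \<in> D n (Suc k)" "v \<noteq> replicate (Suc k) 1"
      "w \<in> E1 n v \<union> E2 n v \<union> E3 n v"
  using assms by (auto simp: Let_def split: if_splits)

lemma D_nonconstant: "w \<in> D n t \<Longrightarrow> w \<noteq> replicate t 1 \<Longrightarrow> nonconstant w"
proof (induction n t arbitrary: w rule: D.induct)
  case (3 n)
  then show ?case by (auto simp: nonconstant_def numeral_2_eq_2)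
next
  case (4 n k)
  from "4.prems"(1) show ?case
  proof (cases rule: mem_D_Suc_Suc_SucE)
    case (even_base a)
    then show ?thesis using "4.prems"(2) by (intro nonconstantI[of 1]) auto
  next
    case odd_base
    then show ?thesis
      using "4.prems"(2) E2_nonconstant by (auto simp: E1_def intro: nonconstantI[of 1])
  next
    case (extension v)
    then show ?thesis
      using "4.IH"[OF refl refl extension(1,2)] E1_nonconstant E2_nonconstant E3_nonconstant
      by blast
  qed
qed auto

lemma length_D: "w \<in> D n t \<Longrightarrow> length w = t"
proof (induction n t arbitrary: w rule: D.induct)
  case (4 n k)
  from "4.prems" show ?case
  proof (cases rule: mem_D_Suc_Suc_SucE)
    case even_base
    then show ?thesis by simp
  next
    case odd_base
    then consider "w \<in> E1 n (replicate (Suc k) 1)" | "w \<in> E2 n (replicate (Suc k) 1)" by blast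
    then show ?thesis
      using E1_length E2_length[of "replicate (Suc k) 1"] by cases simp_all
  next
    case (extension v)
    have v: "length v = Suc k" using "4.IH"[OF refl refl extension(1)] .
    then have "v \<noteq> []" by auto
    moreover have "nonconstant v" using D_nonconstant extension(1,2) .
    ultimately have "length w = length v + 2"
      using extension(3) E1_length E2_length E3_length by blast
    with v show ?thesis by simp
  qed
qed auto

lemma D_even_not_ones_but_last: "w \<in> D n t \<Longrightarrow> even t \<Longrightarrow> \<not> ones_but_last w"
proof (induction n t arbitrary: w rule: D.induct)
  case (3 n)
  then show ?case by (auto simp: ones_but_last_iff)
next
  case (4 n k)
  from "4.prems"(1) show ?case
  proof (cases rule: mem_D_Suc_Suc_SucE)
    case (extension v)
    have "\<not> ones_but_last v" using "4.IH"[OF refl refl extension(1)] "4.prems"(2) by simp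
    moreover have "v \<noteq> []" using length_D[OF extension(1)] by auto
    moreover have "nonconstant v" using D_nonconstant extension(1,2) .
    ultimately show ?thesis
      using extension(3) E1_not_ones_but_last E2_ones_but_last E3_not_ones_but_last by blast
  qed (use "4.prems"(2) in \<open>auto simp: ones_but_last_iff\<close>)
qed auto

lemma sierpinski_adj_replicate_one:
  assumes "sierpinski_adj n t u (replicate t 1)"
  shows "ones_but_last u"
proof -
  from assms obtain s where "s < t" and lu: "length u = t"
    and prefix: "\<forall>j<s. u ! j = 1" and "u ! s \<noteq> 1"
    and suffix: "\<forall>j. s < j \<and> j < t \<longrightarrow> u ! j = 1 \<and> u ! s = 1"
    unfolding sierpinski_adj_def sierpinski_vertices_def by auto
  have s: "s = t - 1"
    using suffix[rule_format, of "t - 1"] \<open>s < t\<close> \<open>u ! s \<noteq> 1\<close> by fastforce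
  have "set (butlast u) \<subseteq> {1}"
    using prefix lu s by (auto simp: in_set_conv_nth nth_butlast)
  moreover have "u \<noteq> []" using lu \<open>s < t\<close> by auto
  moreover have "last u = u ! s" using lu s \<open>u \<noteq> []\<close> by (simp add: last_conv_nth)
  ultimately show ?thesis
    using \<open>u ! s \<noteq> 1\<close> by (simp add: ones_but_last_iff)
qed

theorem mainTheorem9:
  fixes n t :: nat
  assumes "n \<ge> 2" and "t \<ge> 2" and "even t"
      and "u \<in> D n t - {replicate t 1}"
  shows "\<not> sierpinski_adj n t u (replicate t 1)"
  using sierpinski_adj_replicate_one D_even_not_ones_but_last assms(3,4) by blast

end
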